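(* For every policy $i$ and asset level $a>0$, the natural allocation margin $\bar M_i(a):=\bar P_i(a)-\bar S_i(a)$ equals $$\bar M_i(a)=\int_0^a\big(\beta_i(x)\,g(S(x))-\alpha_i(x)\,S(x)\big)\,dx,$$ so the margin density for line $i$ at asset level $a$ is $M_i(a)=\beta_i(a)\,g(S(a))-\alpha_i(a)\,S(a)$.
   Context: Work on an atomless probability space $(\Omega,\mathcal F,\mathsf P)$. A distortion function is an increasing concave function $g:[0,1]\to[0,1]$ with $g(0)=0$ and $g(1)=1$; assume in addition $g$ is continuous at $0$. Its derivative $g'$ exists except at countably many points. For a nonnegative random variable $Y$ with survival function $S_Y(y)=\mathsf P(Y>y)$, the distortion risk measure is $\rho(Y):=\int_0^\infty g(S_Y(y))\,dy$. Let $X_1,\dots,X_n$ be nonnegative integrable random variables and $X=\sum_{i=1}^n X_i$. Assume $X$ has a probability density $f$ and survival function $S(x)=\mathsf P(X>x)$, and $\rho(X)<\infty$. Let $\mathsf Q$ be the probability measure with $d\mathsf Q/d\mathsf P=g'(S(X))$. Equal priority payments: $X_i(a):=X_i\,\frac{X\wedge a}{X}$ ($=X_i$ if $X\le a$, $=X_ia/X$ if $X>a$). Define $\bar S_i(a):=\mathsf E[X_i(a)]$, $\bar P_i(a):=\mathsf E_{\mathsf Q}[X_i(a)]$, and for $x$ with $S(x)>0$, $\alpha_i(x):=\mathsf E[X_i/X\mid X>x]$ and $\beta_i(x):=\mathsf E_{\mathsf Q}[X_i/X\mid X>x]$. *)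

theory Defs
  imports "HOL-Probability.Probability"
begin

definition atomless :: "'a measure \<Rightarrow> bool" where
  "atomless M \<longleftrightarrow> (\<forall>A\<in>sets M. measure M A > 0 \<longrightarrow>
      (\<exists>B\<in>sets M. B \<subseteq> A \<and> 0 < measure M B \<and> measure M B < measure M A))"

definition distortion :: "(real \<Rightarrow> real) \<Rightarrow> bool" where
  "distortion g \<longleftrightarrow> g ` {0..1} \<subseteq> {0..1} \<and> mono_on {0..1} g \<and> concave_on {0..1} g
     \<and> g 0 = 0 \<and> g 1 = 1 \<and> continuous (at 0 within {0..1}) g"

definition Xtot :: "(nat \<Rightarrow> 'a \<Rightarrow> real) \<Rightarrow> nat \<Rightarrow> 'a \<Rightarrow> real" where
  "Xtot Xs n \<omega> = (\<Sum>j=1..n. Xs j \<omega>)"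

definition surv :: "'a measure \<Rightarrow> ('a \<Rightarrow> real) \<Rightarrow> real \<Rightarrow> real" where
  "surv M X x = measure M {\<omega>\<in>space M. X \<omega> > x}"

definition rho :: "'a measure \<Rightarrow> (real \<Rightarrow> real) \<Rightarrow> ('a \<Rightarrow> real) \<Rightarrow> ennreal" where
  "rho M g Y = (\<integral>\<^sup>+ y\<in>{0..}. ennreal (g (surv M Y y)) \<partial>lborel)"

definition Qm :: "'a measure \<Rightarrow> (real \<Rightarrow> real) \<Rightarrow> ('a \<Rightarrow> real) \<Rightarrow> 'a measure" where
  "Qm M gd X = density M (\<lambda>\<omega>. ennreal (gd (surv M X (X \<omega>))))"

definition eqpay :: "(nat \<Rightarrow> 'a \<Rightarrow> real) \<Rightarrow> nat \<Rightarrow> nat \<Rightarrow> real \<Rightarrow> 'a \<Rightarrow> real" where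
  "eqpay Xs n i a \<omega> = Xs i \<omega> * min (Xtot Xs n \<omega>) a / Xtot Xs n \<omega>"

definition Sbar :: "'a measure \<Rightarrow> (nat \<Rightarrow> 'a \<Rightarrow> real) \<Rightarrow> nat \<Rightarrow> nat \<Rightarrow> real \<Rightarrow> real" where
  "Sbar M Xs n i a = (\<integral>\<omega>. eqpay Xs n i a \<omega> \<partial>M)"

definition Pbar :: "'a measure \<Rightarrow> (real \<Rightarrow> real) \<Rightarrow> (nat \<Rightarrow> 'a \<Rightarrow> real) \<Rightarrow> nat \<Rightarrow> nat \<Rightarrow> real \<Rightarrow> real" where
  "Pbar M gd Xs n i a = (\<integral>\<omega>. eqpay Xs n i a \<omega> \<partial>(Qm M gd (Xtot Xs n)))"

definition cond_exp_event :: "'a measure \<Rightarrow> ('a \<Rightarrow> real) \<Rightarrow> 'a set \<Rightarrow> real" where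
  "cond_exp_event M Y A = (\<integral>\<omega>. Y \<omega> * indicator A \<omega> \<partial>M) / measure M A"

definition alpha :: "'a measure \<Rightarrow> (nat \<Rightarrow> 'a \<Rightarrow> real) \<Rightarrow> nat \<Rightarrow> nat \<Rightarrow> real \<Rightarrow> real" where
  "alpha M Xs n i x = cond_exp_event M (\<lambda>\<omega>. Xs i \<omega> / Xtot Xs n \<omega>)
       {\<omega>\<in>space M. Xtot Xs n \<omega> > x}"

definition beta :: "'a measure \<Rightarrow> (real \<Rightarrow> real) \<Rightarrow> (nat \<Rightarrow> 'a \<Rightarrow> real) \<Rightarrow> nat \<Rightarrow> nat \<Rightarrow> real \<Rightarrow> real" where
  "beta M gd Xs n i x = cond_exp_event (Qm M gd (Xtot Xs n)) (\<lambda>\<omega>. Xs i \<omega> / Xtot Xs n \<omega>)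
       {\<omega>\<in>space M. Xtot Xs n \<omega> > x}"

end

theory Submission
  imports Defs
begin

text \<open>
  Put \<open>U = S(X)\<close>. Since \<open>X\<close> has no atoms, \<open>U\<close> is uniform on \<open>[0,1]\<close>, and \<open>{X > x}\<close>
  agrees up to a null set with \<open>{U < S(x)}\<close>; hence \<open>Q(X > x)\<close> is the integral of \<open>g'\<close> over
  \<open>[0, S(x))\<close>, which is \<open>g(S(x))\<close> by the fundamental theorem of calculus for the concave \<open>g\<close>:
  its derivative exists off a countable set and dominates its forward difference quotients.
  For \<open>R = X\<^sub>i / X \<in> [0,1]\<close> the layer-cake formula gives
  \<open>E[R min(X, a)] = \<integral>\<^sub>0\<^sup>a E[R; X > x] dx\<close> under both \<open>P\<close> and \<open>Q\<close>, and \<open>E[R; X > x]\<close>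
  equals \<open>\<alpha>\<^sub>i(x) S(x)\<close> resp. \<open>\<beta>\<^sub>i(x) g(S(x))\<close>. These tail integrals are continuous in \<open>x\<close>
  because \<open>S\<close> and \<open>g \<circ> S\<close> are, so the margin is the integral of a continuous density.
\<close>

lemma concave_mono_continuous_within_1:
  fixes g :: "real \<Rightarrow> real"
  assumes cc: "concave_on {0..1} g" and mo: "mono_on {0..1} g"
  shows "continuous (at 1 within {0..1}) g"
proof -
  let ?chord = "\<lambda>t. (2*t - 1) * g 1 + (2 - 2*t) * g (1/2)"
  have "(?chord \<longlongrightarrow> (2*1 - 1) * g 1 + (2 - 2*1) * g (1/2)) (at 1 within {0..1})"
    by (intro tendsto_intros)
  then have chord_lim: "(?chord \<longlongrightarrow> g 1) (at 1 within {0..1})" by simp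
  have near_1: "eventually (\<lambda>t::real. t \<in> {1/2..1}) (at 1 within {0..1})"
  proof -
    have "eventually (\<lambda>t::real. t > 1/2) (at 1 within {0..1})"
      by (intro eventually_at_topological[THEN iffD2] exI[of _ "{(1/2::real)<..}"]) auto
    moreover have "eventually (\<lambda>t::real. t \<in> {0..1}) (at 1 within {0..1})"
      by (simp add: eventually_at_filter)
    ultimately show ?thesis by eventually_elim auto
  qed
  have below: "eventually (\<lambda>t. ?chord t \<le> g t) (at 1 within {0..1})"
    using near_1
  proof eventually_elim
    case (elim t)
    have "(1 - (2*t-1)) * g (1/2) + (2*t-1) * g 1 \<le> g ((1 - (2*t-1)) *\<^sub>R (1/2) + (2*t-1) *\<^sub>R 1)"
      using elim by (intro concave_onD[OF cc]) auto
    also have "(1 - (2*t-1)) *\<^sub>R (1/2) + (2*t-1) *\<^sub>R (1::real) = t" by (simp add: algebra_simps)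
    finally show ?case by (simp add: algebra_simps)
  qed
  have above: "eventually (\<lambda>t. g t \<le> g 1) (at 1 within {0..1})"
    using near_1 by eventually_elim (auto intro!: mono_onD[OF mo])
  have "(g \<longlongrightarrow> g 1) (at 1 within {0..1})"
    by (rule tendsto_sandwich[OF below above chord_lim tendsto_const])
  then show ?thesis by (simp add: continuous_within)
qed

lemma distortion_continuous_on:
  assumes "distortion g" shows "continuous_on {0..1} g"
proof -
  have cc: "concave_on {0..1} g" and mo: "mono_on {0..1} g"
    and at_0: "continuous (at 0 within {0..1}) g"
    using assms by (auto simp: distortion_def)
  have interior: "continuous_on {0<..<1} g"
  proof -
    have "convex_on {0<..<1} (\<lambda>x. - g x)"
      using cc unfolding concave_on_def by (rule convex_on_subset) auto
    then have "continuous_on {0<..<1} (\<lambda>x. - g x)" by (intro convex_on_continuous) auto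
    then show ?thesis using continuous_on_minus[of "{0<..<1}" "\<lambda>x. - g x"] by simp
  qed
  show ?thesis unfolding continuous_on_eq_continuous_within
  proof
    fix x :: real assume x: "x \<in> {0..1}"
    show "continuous (at x within {0..1}) g"
    proof (cases "x = 0 \<or> x = 1")
      case True
      then show ?thesis using at_0 concave_mono_continuous_within_1[OF cc mo] by auto
    next
      case False
      then have "isCont g x" using x interior by (simp add: continuous_on_eq_continuous_at)
      then show ?thesis by (rule continuous_at_imp_continuous_within)
    qed
  qed
qed

lemma LIMSEQ_difference_quotient:
  fixes f :: "real \<Rightarrow> real"
  assumes "(f has_real_derivative D) (at x)"
  shows "(\<lambda>k. (f (x + 1 / Suc k) - f x) * Suc k) \<longlonglongrightarrow> D"
proof -
  have quotient_lim: "((\<lambda>y. (f y - f x) / (y - x)) \<longlongrightarrow> D) (at x)"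
    using assms by (simp add: has_field_derivative_iff)
  have to_x: "(\<lambda>k. x + 1 / real (Suc k)) \<longlonglongrightarrow> x"
    using tendsto_add[OF tendsto_const[of x] LIMSEQ_inverse_real_of_nat]
    by (simp add: inverse_eq_divide)
  have "\<forall>k. x + 1 / real (Suc k) \<noteq> x" by simp
  then have "(\<lambda>k. (\<lambda>y. (f y - f x) / (y - x)) (x + 1 / real (Suc k))) \<longlonglongrightarrow> D"
    using quotient_lim[unfolded LIMSEQ_SEQ_conv[symmetric], rule_format, OF conjI[OF _ to_x]] by blast
  then show ?thesis by simp
qed

text \<open>Extends \<open>g\<close> constantly outside \<open>[0,1]\<close>, so that difference quotients and primitives
  can be formed on all of \<open>\<real>\<close>.\<close>
definition clamp01 :: "(real \<Rightarrow> real) \<Rightarrow> real \<Rightarrow> real" where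
  "clamp01 g u = g (max 0 (min u 1))"

text \<open>The hypothesis says nothing about \<open>gd\<close> on the exceptional set; zeroing it there yields
  a Borel measurable function.\<close>
definition deriv_off :: "real set \<Rightarrow> (real \<Rightarrow> real) \<Rightarrow> real \<Rightarrow> real" where
  "deriv_off C gd u = (if u \<in> {0<..<1} - C then gd u else 0)"

lemma clamp01_eq: "u \<in> {0..1} \<Longrightarrow> clamp01 g u = g u"
  by (simp add: clamp01_def)

lemma continuous_on_clamp01:
  assumes "distortion g" shows "continuous_on UNIV (clamp01 g)"
proof -
  have "continuous_on UNIV (\<lambda>u::real. max 0 (min u 1))" by (intro continuous_intros)
  moreover have "(\<lambda>u::real. max 0 (min u 1)) ` UNIV \<subseteq> {0..1}" by auto
  ultimately show ?thesis unfolding clamp01_def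
    using continuous_on_compose2[OF distortion_continuous_on[OF assms]] by blast
qed

lemma borel_measurable_clamp01[measurable]: "distortion g \<Longrightarrow> clamp01 g \<in> borel_measurable borel"
  by (rule borel_measurable_continuous_onI[OF continuous_on_clamp01])

lemma mono_clamp01:
  assumes "distortion g" shows "mono (clamp01 g)"
  using assms unfolding clamp01_def distortion_def
  by (intro monoI mono_onD[of "{0..1}" g]) auto

lemma has_real_derivative_clamp01:
  assumes "(g has_real_derivative D) (at u)" "u \<in> {0<..<1}"
  shows "(clamp01 g has_real_derivative D) (at u)"
  by (rule has_field_derivative_transform_within_open[OF assms(1) _ assms(2)])
     (auto simp: clamp01_def)

lemma distortion_deriv_nonneg:
  assumes "distortion g" "(g has_real_derivative D) (at u)" "u \<in> {0<..<1}"
  shows "0 \<le> D"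
proof -
  have "(\<lambda>k. (clamp01 g (u + 1 / Suc k) - clamp01 g u) * Suc k) \<longlonglongrightarrow> D"
    by (rule LIMSEQ_difference_quotient[OF has_real_derivative_clamp01[OF assms(2,3)]])
  moreover have "0 \<le> (clamp01 g (u + 1 / Suc k) - clamp01 g u) * Suc k" for k
    using monoD[OF mono_clamp01[OF assms(1)], of u "u + 1 / Suc k"] by simp
  ultimately show ?thesis by (intro LIMSEQ_le_const[of _ D 0]) blast+
qed

lemma distortion_increment_le_deriv:
  assumes "distortion g" "(g has_real_derivative D) (at u)" "u \<in> {0<..<1}" "h > 0"
  shows "clamp01 g (u + h) - clamp01 g u \<le> D * h"
proof -
  have cv: "convex_on {0..1} (\<lambda>x. - g x)"
    using assms(1) by (simp add: distortion_def concave_on_def)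
  have deriv: "((\<lambda>x. - g x) has_field_derivative - D) (at u within {0..1})"
    using has_field_derivative_at_within[OF DERIV_minus[OF assms(2)]] .
  have u: "u \<in> interior {0..1::real}" using assms(3) by auto
  have tangent: "g x - g u \<le> D * (x - u)" if "x \<in> {0..1}" for x
  proof -
    have "- g x - - g u \<ge> - D * (x - u)"
      by (rule convex_on_imp_above_tangent[OF cv _ u that deriv]) (simp add: is_interval_connected)
    then show ?thesis by (simp add: algebra_simps)
  qed
  show ?thesis
  proof (cases "u + h \<le> 1")
    case True
    then show ?thesis using tangent[of "u + h"] assms(3,4) by (simp add: clamp01_eq)
  next
    case False
    have "g 1 - g u \<le> D * (1 - u)" using tangent[of 1] by simp
    also have "\<dots> \<le> D * h"
      using False distortion_deriv_nonneg[OF assms(1-3)] by (intro mult_left_mono) auto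
    finally have "g 1 - g u \<le> D * h" .
    moreover have "clamp01 g (u + h) = g 1" using False by (simp add: clamp01_def)
    moreover have "clamp01 g u = g u" using assms(3) by (simp add: clamp01_eq)
    ultimately show ?thesis by simp
  qed
qed

lemma borel_measurable_deriv_off:
  assumes g: "distortion g" and C: "countable C"
    and d: "\<forall>t\<in>{0<..<1} - C. (g has_real_derivative gd t) (at t)"
  shows "deriv_off C gd \<in> borel_measurable borel"
proof (rule borel_measurable_LIMSEQ_real)
  let ?D = "{0<..<1} - C"
  have "C \<in> sets borel" by (rule sets.countable) (auto simp: C)
  then have "?D \<in> sets borel" by auto
  then show "(\<lambda>x. indicator ?D x * ((clamp01 g (x + 1 / Suc k) - clamp01 g x) * Suc k))
      \<in> borel_measurable borel" for k
    using borel_measurable_clamp01[OF g] by measurable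
  fix x :: real
  show "(\<lambda>k. indicator ?D x * ((clamp01 g (x + 1 / Suc k) - clamp01 g x) * Suc k))
      \<longlonglongrightarrow> deriv_off C gd x"
  proof (cases "x \<in> ?D")
    case True
    then have "(\<lambda>k. (clamp01 g (x + 1 / Suc k) - clamp01 g x) * Suc k) \<longlonglongrightarrow> gd x"
      using d by (intro LIMSEQ_difference_quotient has_real_derivative_clamp01) auto
    then show ?thesis using True by (simp add: deriv_off_def)
  next
    case False
    then show ?thesis unfolding deriv_off_def by (subst if_not_P) simp_all
  qed
qed

lemma has_real_derivative_integral_upper:
  fixes G :: "real \<Rightarrow> real"
  assumes "continuous_on {a..b} G" and "t \<in> {a<..<b}"
  shows "((\<lambda>t. integral {a..t} G) has_real_derivative G t) (at t)"
proof -
  have "((\<lambda>t. integral {a..t} G) has_real_derivative G t) (at t within {a..b})"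
    using assms by (intro integral_has_real_derivative) auto
  moreover have "t \<in> interior {a..b}" using assms(2) by (simp add: interior_atLeastAtMost_real)
  ultimately show ?thesis using at_within_interior[of t "{a..b}"] by metis
qed

lemma nn_integral_indicator_atLeastLessThan_eq_LINT:
  fixes f :: "real \<Rightarrow> real"
  assumes "continuous_on {a..b} f" and "\<And>u. u \<in> {a..b} \<Longrightarrow> 0 \<le> f u"
  shows "(\<integral>\<^sup>+u. ennreal (f u) * indicator {a..<b} u \<partial>lborel) = ennreal (LBINT u:{a..b}. f u)"
proof -
  have "AE u in lborel. u \<notin> {b}" by (rule AE_not_in) auto
  then have "(\<integral>\<^sup>+u. ennreal (f u) * indicator {a..<b} u \<partial>lborel)
      = (\<integral>\<^sup>+u. ennreal (indicator {a..b} u *\<^sub>R f u) \<partial>lborel)"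
    by (intro nn_integral_cong_AE) (auto simp: indicator_def)
  also have "\<dots> = ennreal (LBINT u:{a..b}. f u)"
    unfolding set_lebesgue_integral_def using assms
    by (intro nn_integral_eq_integral borel_integrable_compact) (auto simp: indicator_def)
  finally show ?thesis .
qed

lemma continuous_on_difference_quotient:
  fixes G :: "real \<Rightarrow> real"
  assumes G: "continuous_on UNIV G"
  shows "continuous_on A (\<lambda>u. (G (u + h) - G u) * c)"
proof -
  have "continuous_on UNIV (\<lambda>u. G (u + h))"
    by (rule continuous_on_compose2[OF G]) (auto intro: continuous_intros)
  then have "continuous_on UNIV (\<lambda>u. (G (u + h) - G u) * c)" by (intro continuous_intros G)
  then show ?thesis by (rule continuous_on_subset) auto
qed

text \<open>With a primitive \<open>F\<close> of \<open>G\<close>, the integral of the difference quotient of \<open>G\<close> over \<open>[0,s]\<close>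
  is the difference of the difference quotients of \<open>F\<close> at \<open>s\<close> and at \<open>0\<close>.\<close>
lemma LIMSEQ_set_integral_difference_quotient:
  fixes G :: "real \<Rightarrow> real"
  assumes G: "continuous_on UNIV G" and s: "0 \<le> s"
  shows "(\<lambda>k. LBINT u:{0..s}. (G (u + 1 / Suc k) - G u) * Suc k) \<longlonglongrightarrow> G s - G 0"
proof -
  define F where "F t = integral {-1..t} G" for t
  have F_deriv: "(F has_real_derivative G t) (at t)" if "t \<in> {-1<..<s+2}" for t
    unfolding F_def using that
    by (intro has_real_derivative_integral_upper continuous_on_subset[OF G]) auto
  define DQ where "DQ k u = (G (u + 1 / Suc k) - G u) * Suc k" for k u
  define \<Phi> where "\<Phi> k u = (F (u + 1 / Suc k) - F u) * Suc k" for k u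
  have \<Phi>_deriv: "(\<Phi> k has_real_derivative DQ k u) (at u)" if "u \<in> {0..s}" for k u
  proof -
    have "0 < 1 / real (Suc k)" "1 / real (Suc k) \<le> 1" by auto
    then have "u + 1 / real (Suc k) \<in> {-1<..<s+2}"
      using that unfolding greaterThanLessThan_iff atLeastAtMost_iff by linarith
    then have "((\<lambda>x. F (x + 1 / Suc k)) has_real_derivative G (u + 1 / Suc k)) (at u)"
      using F_deriv DERIV_shift by blast
    moreover have "(F has_real_derivative G u) (at u)" using that s by (intro F_deriv) auto
    ultimately show ?thesis unfolding \<Phi>_def DQ_def by (intro DERIV_cmult_right DERIV_diff)
  qed
  have "interval_lebesgue_integral lborel (ereal 0) (ereal s) (DQ k) = \<Phi> k s - \<Phi> k 0" for k
  proof (rule interval_integral_FTC_finite)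
    show "continuous_on {min 0 s..max 0 s} (DQ k)"
      unfolding DQ_def by (rule continuous_on_difference_quotient[OF G])
    fix x assume "min 0 s \<le> x" "x \<le> max 0 s"
    then show "(\<Phi> k has_vector_derivative DQ k x) (at x within {min 0 s..max 0 s})"
      using \<Phi>_deriv[of x k] s
      by (simp add: has_real_derivative_iff_has_vector_derivative has_vector_derivative_at_within)
  qed
  then have integral_eq: "(LBINT u:{0..s}. DQ k u) = \<Phi> k s - \<Phi> k 0" for k
    using s interval_integral_Icc[of 0 s "DQ k"] by simp
  have "(\<lambda>k. (F (s + 1 / Suc k) - F s) * Suc k) \<longlonglongrightarrow> G s"
    using s by (intro LIMSEQ_difference_quotient F_deriv) auto
  moreover have "(\<lambda>k. (F (0 + 1 / Suc k) - F 0) * Suc k) \<longlonglongrightarrow> G 0"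
    using s by (intro LIMSEQ_difference_quotient F_deriv) auto
  ultimately have "(\<lambda>k. \<Phi> k s - \<Phi> k 0) \<longlonglongrightarrow> G s - G 0"
    unfolding \<Phi>_def by (intro tendsto_diff) auto
  then show ?thesis unfolding DQ_def[symmetric] integral_eq .
qed

lemma LIMSEQ_nn_integral_difference_quotient:
  fixes G :: "real \<Rightarrow> real"
  assumes G: "continuous_on UNIV G" and "mono G" and s: "0 \<le> s"
  shows "(\<lambda>k. \<integral>\<^sup>+u. ennreal ((G (u + 1 / Suc k) - G u) * Suc k) * indicator {0..<s} u \<partial>lborel)
    \<longlonglongrightarrow> ennreal (G s - G 0)"
proof -
  have "0 \<le> (G (u + 1 / Suc k) - G u) * Suc k" for k u
    using monoD[OF \<open>mono G\<close>, of u "u + 1 / Suc k"] by simp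
  then show ?thesis
    using LIMSEQ_set_integral_difference_quotient[OF G s]
    by (simp add: nn_integral_indicator_atLeastLessThan_eq_LINT continuous_on_difference_quotient[OF G]
        tendsto_ennrealI)
qed

lemma nn_integral_eq_of_tendsto_below:
  fixes f :: "nat \<Rightarrow> 'a \<Rightarrow> ennreal"
  assumes [measurable]: "\<And>k. f k \<in> borel_measurable M"
    and lim: "AE x in M. (\<lambda>k. f k x) \<longlonglongrightarrow> h x"
    and below: "\<And>k. AE x in M. f k x \<le> h x"
    and integral_lim: "(\<lambda>k. \<integral>\<^sup>+x. f k x \<partial>M) \<longlonglongrightarrow> L"
  shows "(\<integral>\<^sup>+x. h x \<partial>M) = L"
proof (rule antisym)
  have "(\<integral>\<^sup>+x. h x \<partial>M) = (\<integral>\<^sup>+x. liminf (\<lambda>k. f k x) \<partial>M)"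
    using lim by (intro nn_integral_cong_AE) (auto elim!: eventually_mono simp: lim_imp_Liminf)
  also have "\<dots> \<le> liminf (\<lambda>k. \<integral>\<^sup>+x. f k x \<partial>M)" by (rule nn_integral_liminf) measurable
  also have "\<dots> = L" using integral_lim by (simp add: lim_imp_Liminf)
  finally show "(\<integral>\<^sup>+x. h x \<partial>M) \<le> L" .
  show "L \<le> (\<integral>\<^sup>+x. h x \<partial>M)"
    using below by (intro LIMSEQ_le_const2[OF integral_lim]) (auto intro: nn_integral_mono_AE)
qed

text \<open>Concavity makes \<open>g'\<close> dominate its forward difference quotients.\<close>
lemma nn_integral_deriv_off:
  assumes g: "distortion g" and C: "countable C"
    and d: "\<forall>t\<in>{0<..<1} - C. (g has_real_derivative gd t) (at t)"
    and s: "0 \<le> s" "s \<le> 1"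
  shows "(\<integral>\<^sup>+u. ennreal (deriv_off C gd u) * indicator {0..<s} u \<partial>lborel) = ennreal (g s)"
proof -
  define DQ where "DQ k u = (clamp01 g (u + 1 / Suc k) - clamp01 g u) * Suc k" for k u
  have DQ_le: "DQ k u \<le> gd u" and DQ_lim: "(\<lambda>k. DQ k u) \<longlonglongrightarrow> gd u"
    if "u \<in> {0<..<1} - C" for k u
  proof -
    have "clamp01 g (u + 1 / Suc k) - clamp01 g u \<le> gd u * (1 / Suc k)"
      using that d by (intro distortion_increment_le_deriv[OF g]) auto
    then show "DQ k u \<le> gd u" unfolding DQ_def by (simp add: field_simps)
    show "(\<lambda>k. DQ k u) \<longlonglongrightarrow> gd u"
      unfolding DQ_def using that d
      by (intro LIMSEQ_difference_quotient has_real_derivative_clamp01) auto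
  qed
  have "AE u in lborel. u \<notin> C \<union> {0}"
    by (rule AE_not_in) (use C in \<open>auto intro: countable_imp_null_set_lborel\<close>)
  then have good: "AE u in lborel. u \<in> {0..<s} \<longrightarrow> u \<in> {0<..<1} - C"
    by eventually_elim (use s in auto)
  have "clamp01 g s - clamp01 g 0 = g s"
    using s g by (simp add: clamp01_eq distortion_def)
  then show ?thesis
  proof (intro nn_integral_eq_of_tendsto_below[where f="\<lambda>k u. ennreal (DQ k u) * indicator {0..<s} u"])
    show "(\<lambda>u. ennreal (DQ k u) * indicator {0..<s} u) \<in> borel_measurable lborel" for k
      unfolding DQ_def using borel_measurable_clamp01[OF g] by measurable
    show "AE u in lborel. (\<lambda>k. ennreal (DQ k u) * indicator {0..<s} u)
        \<longlonglongrightarrow> ennreal (deriv_off C gd u) * indicator {0..<s} u"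
      using good
    proof eventually_elim
      case (elim u)
      then show ?case
        by (cases "u \<in> {0..<s}") (auto simp: deriv_off_def intro!: tendsto_ennrealI DQ_lim)
    qed
    show "AE u in lborel. ennreal (DQ k u) * indicator {0..<s} u
        \<le> ennreal (deriv_off C gd u) * indicator {0..<s} u" for k
      using good by eventually_elim (auto simp: deriv_off_def DQ_le ennreal_leI indicator_def)
  qed (use LIMSEQ_nn_integral_difference_quotient[OF continuous_on_clamp01[OF g] mono_clamp01[OF g] s(1)]
    in \<open>simp add: DQ_def\<close>)
qed

locale continuous_loss = prob_space M for M :: "'a measure" +
  fixes X :: "'a \<Rightarrow> real"
  assumes borel_measurable_X[measurable]: "X \<in> borel_measurable M"
    and X_nonneg: "\<omega> \<in> space M \<Longrightarrow> 0 \<le> X \<omega>"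
    and prob_X_eq: "prob {\<omega>\<in>space M. X \<omega> = t} = 0"
begin

abbreviation S :: "real \<Rightarrow> real" where "S \<equiv> surv M X"

lemma real_distribution_X: "real_distribution (distr M borel X)"
  by (simp add: real_distribution_distr)

lemma surv_eq_1_minus_cdf: "S t = 1 - cdf (distr M borel X) t"
proof -
  have "cdf (distr M borel X) t = prob {\<omega>\<in>space M. X \<omega> \<le> t}"
    unfolding cdf_def by (subst measure_distr) (auto intro!: arg_cong[where f=prob])
  moreover have "{\<omega>\<in>space M. X \<omega> > t} = space M - {\<omega>\<in>space M. X \<omega> \<le> t}" by auto
  ultimately show ?thesis unfolding surv_def by (simp add: prob_compl)
qed

lemma isCont_surv: "isCont S t"
proof -
  interpret D: real_distribution "distr M borel X" by (rule real_distribution_X)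
  have "measure (distr M borel X) {t} = prob {\<omega>\<in>space M. X \<omega> = t}"
    by (subst measure_distr) (auto intro!: arg_cong[where f=prob])
  then have "isCont (cdf (distr M borel X)) t" using prob_X_eq D.isCont_cdf by simp
  then have "isCont (\<lambda>t. 1 - cdf (distr M borel X) t) t" by (intro continuous_intros)
  then show ?thesis by (simp add: surv_eq_1_minus_cdf[abs_def])
qed

lemma continuous_on_surv: "continuous_on A S"
  using isCont_surv by (simp add: continuous_at_imp_continuous_on)

lemma borel_measurable_surv[measurable]: "S \<in> borel_measurable borel"
  by (rule borel_measurable_continuous_onI[OF continuous_on_surv])

lemma surv_nonneg: "0 \<le> S t" and surv_le_1: "S t \<le> 1"
  unfolding surv_def by auto

lemma surv_antimono: "s \<le> t \<Longrightarrow> S t \<le> S s"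
  unfolding surv_def by (intro finite_measure_mono) auto

lemma surv_neg: "t < 0 \<Longrightarrow> S t = 1"
proof -
  assume "t < 0"
  then have "{\<omega>\<in>space M. X \<omega> > t} = space M" using X_nonneg by force
  then show ?thesis unfolding surv_def by (simp add: prob_space)
qed

lemma surv_tendsto_0: "(S \<longlongrightarrow> 0) at_top"
proof -
  interpret D: real_distribution "distr M borel X" by (rule real_distribution_X)
  have "((\<lambda>t. 1 - cdf (distr M borel X) t) \<longlongrightarrow> 1 - 1) at_top"
    by (intro tendsto_intros D.cdf_lim_at_top_prob)
  then show ?thesis by (simp add: surv_eq_1_minus_cdf[abs_def])
qed

text \<open>Probability integral transform; the level set of \<open>S\<close> at height \<open>u\<close> starts at
  \<open>Inf {t. S t \<le> u}\<close>, and \<open>X\<close> hits that point with probability zero.\<close>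
lemma prob_surv_X_le_interior:
  assumes u: "0 < u" "u < 1"
  shows "prob {\<omega>\<in>space M. S (X \<omega>) \<le> u} = u"
proof -
  define T where "T = {t. S t \<le> u}"
  obtain t0 where "S t0 < u"
    using order_tendstoD(2)[OF surv_tendsto_0 u(1)] by (metis eventually_at_top_linorder order_refl)
  then have T_ne: "T \<noteq> {}" unfolding T_def by (auto intro: less_imp_le)
  have T_bdd: "bdd_below T"
    using surv_neg u(2) by (intro bdd_belowI[of _ 0]) (force simp: T_def not_le[symmetric])
  have "closed T" unfolding T_def
    by (intro closed_Collect_le continuous_on_surv continuous_on_const)
  define ts where "ts = Inf T"
  have "ts \<in> T" unfolding ts_def by (rule closed_contains_Inf[OF T_ne T_bdd \<open>closed T\<close>])
  then have le: "S ts \<le> u" by (simp add: T_def)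
  have below: "u < S t" if "t < ts" for t
    using cInf_lower[OF _ T_bdd, of t] that unfolding ts_def T_def by force
  have "u \<le> S ts"
  proof -
    have "(\<lambda>k. ts - 1 / Suc k) \<longlonglongrightarrow> ts - 0"
      by (intro tendsto_intros LIMSEQ_inverse_real_of_nat[unfolded inverse_eq_divide])
    then have "(\<lambda>k. S (ts - 1 / Suc k)) \<longlonglongrightarrow> S ts"
      using isCont_tendsto_compose[OF isCont_surv] by simp
    moreover have "\<forall>k. u \<le> S (ts - 1 / Suc k)"
      using below by (auto intro: less_imp_le)
    ultimately show ?thesis by (intro LIMSEQ_le_const[of _ "S ts"]) auto
  qed
  with le have S_ts: "S ts = u" by simp
  have "{\<omega>\<in>space M. S (X \<omega>) \<le> u} = {\<omega>\<in>space M. X \<omega> > ts} \<union> {\<omega>\<in>space M. X \<omega> = ts}"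
    using below S_ts surv_antimono[of ts] by (force simp: not_less[symmetric])
  then have "prob {\<omega>\<in>space M. S (X \<omega>) \<le> u}
      = prob {\<omega>\<in>space M. X \<omega> > ts} + prob {\<omega>\<in>space M. X \<omega> = ts}"
    by (simp only:) (rule finite_measure_Union, auto)
  also have "\<dots> = u" using prob_X_eq S_ts by (simp add: surv_def)
  finally show ?thesis .
qed

lemma prob_surv_X_le:
  assumes "u \<in> {0..1}"
  shows "prob {\<omega>\<in>space M. S (X \<omega>) \<le> u} = u"
proof -
  consider "u = 0" | "u = 1" | "0 < u \<and> u < 1" using assms by fastforce
  then show ?thesis
  proof cases
    case 1
    have "prob {\<omega>\<in>space M. S (X \<omega>) \<le> 0} \<le> 0 + e" if "0 < e" for e
    proof (cases "e < 1")
      case True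
      have "prob {\<omega>\<in>space M. S (X \<omega>) \<le> 0} \<le> prob {\<omega>\<in>space M. S (X \<omega>) \<le> e}"
        using that by (intro finite_measure_mono) auto
      also have "\<dots> = e" using that True by (intro prob_surv_X_le_interior)
      finally show ?thesis by simp
    next
      case False
      then show ?thesis using prob_le_1[of "{\<omega>\<in>space M. S (X \<omega>) \<le> 0}"] by linarith
    qed
    then have "prob {\<omega>\<in>space M. S (X \<omega>) \<le> 0} \<le> 0" by (rule field_le_epsilon)
    then show ?thesis using 1 measure_nonneg[of M "{\<omega>\<in>space M. S (X \<omega>) \<le> 0}"] by simp
  next
    case 2
    have "{\<omega>\<in>space M. S (X \<omega>) \<le> 1} = space M" using surv_le_1 by auto
    then show ?thesis using 2 by (simp add: prob_space)
  qed (simp add: prob_surv_X_le_interior)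
qed

lemma distr_surv_X_uniform: "distr M borel (\<lambda>\<omega>. S (X \<omega>)) = uniform_measure lborel {0..1}"
proof (rule cdf_unique)
  show "real_distribution (distr M borel (\<lambda>\<omega>. S (X \<omega>)))"
    by (simp add: real_distribution_distr)
  show "real_distribution (uniform_measure lborel {0..1::real})"
    unfolding real_distribution_def real_distribution_axioms_def
    by (auto intro: prob_space_uniform_measure)
  show "cdf (distr M borel (\<lambda>\<omega>. S (X \<omega>))) = cdf (uniform_measure lborel {0..1})"
  proof
    fix u :: real
    have "cdf (distr M borel (\<lambda>\<omega>. S (X \<omega>))) u = prob {\<omega>\<in>space M. S (X \<omega>) \<le> u}"
      unfolding cdf_def by (subst measure_distr) (auto intro!: arg_cong[where f=prob])
    also have "\<dots> = measure lborel ({0..1} \<inter> {..u})"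
    proof -
      consider "u < 0" | "u \<in> {0..1}" | "1 < u" by fastforce
      then show ?thesis
      proof cases
        case 1
        then have "\<not> S (X \<omega>) \<le> u" for \<omega> using surv_nonneg[of "X \<omega>"] by linarith
        then have e1: "{\<omega>\<in>space M. S (X \<omega>) \<le> u} = {}" by auto
        have e2: "{0..1} \<inter> {..u} = ({}::real set)" using 1 by auto
        show ?thesis unfolding e1 e2 by simp
      next
        case 2
        then have "{0..1} \<inter> {..u} = {0..u}" by auto
        then show ?thesis using 2 prob_surv_X_le by simp
      next
        case 3
        then have "S (X \<omega>) \<le> u" for \<omega> using surv_le_1[of "X \<omega>"] by linarith
        then have e1: "{\<omega>\<in>space M. S (X \<omega>) \<le> u} = space M" by auto
        have e2: "{0..1} \<inter> {..u} = {0..1::real}" using 3 by auto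
        show ?thesis unfolding e1 e2 by (simp add: prob_space)
      qed
    qed
    also have "\<dots> = cdf (uniform_measure lborel {0..1}) u"
      unfolding cdf_def measure_def
      by (subst emeasure_uniform_measure) (auto simp: divide_ennreal_def)
    finally show "cdf (distr M borel (\<lambda>\<omega>. S (X \<omega>))) u = cdf (uniform_measure lborel {0..1}) u" .
  qed
qed

lemma nn_integral_surv_X:
  assumes [measurable]: "\<phi> \<in> borel_measurable borel"
  shows "(\<integral>\<^sup>+\<omega>. \<phi> (S (X \<omega>)) \<partial>M) = (\<integral>\<^sup>+u. \<phi> u * indicator {0..1} u \<partial>lborel)"
proof -
  have "(\<integral>\<^sup>+\<omega>. \<phi> (S (X \<omega>)) \<partial>M) = (\<integral>\<^sup>+u. \<phi> u \<partial>distr M borel (\<lambda>\<omega>. S (X \<omega>)))"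
    by (subst nn_integral_distr) auto
  also have "\<dots> = (\<integral>\<^sup>+u. \<phi> u * indicator {0..1} u \<partial>lborel)"
    unfolding distr_surv_X_uniform
    by (subst nn_integral_uniform_measure) (auto simp: divide_ennreal_def)
  finally show ?thesis .
qed

lemma prob_surv_X_in:
  assumes "B \<in> sets borel"
  shows "prob {\<omega>\<in>space M. S (X \<omega>) \<in> B} = measure lborel ({0..1} \<inter> B)"
proof -
  have "prob {\<omega>\<in>space M. S (X \<omega>) \<in> B} = measure (distr M borel (\<lambda>\<omega>. S (X \<omega>))) B"
    using assms by (subst measure_distr) (auto intro!: arg_cong[where f=prob])
  also have "\<dots> = measure lborel ({0..1} \<inter> B)"
    unfolding distr_surv_X_uniform measure_def using assms
    by (subst emeasure_uniform_measure) (auto simp: divide_ennreal_def)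
  finally show ?thesis .
qed

end

lemma borel_measurable_if_countable:
  fixes h f :: "real \<Rightarrow> real"
  assumes h: "h \<in> borel_measurable borel" and D: "countable D"
  shows "(\<lambda>u. if u \<in> D then f u else h u) \<in> borel_measurable borel"
proof (rule borel_measurableI)
  fix B :: "real set" assume "open B"
  have countable_sets: "A \<in> sets borel" if "countable A" for A :: "real set"
    by (rule sets.countable) (auto simp: that)
  have "(\<lambda>u. if u \<in> D then f u else h u) -` B \<inter> space borel
      = (D \<inter> f -` B) \<union> (- D \<inter> (h -` B \<inter> space borel))"
    by (auto split: if_splits)
  moreover have "D \<inter> f -` B \<in> sets borel" using D by (auto intro: countable_sets countable_subset)
  moreover have "- D \<in> sets borel" using countable_sets[OF D] by auto
  moreover have "h -` B \<inter> space borel \<in> sets borel" by (rule measurable_sets[OF h]) (simp add: \<open>open B\<close>)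
  ultimately show "(\<lambda>u. if u \<in> D then f u else h u) -` B \<inter> space borel \<in> sets borel" by auto
qed

locale distorted_loss = continuous_loss +
  fixes g gd :: "real \<Rightarrow> real" and C :: "real set"
  assumes distortion_g: "distortion g" and countable_C: "countable C"
    and g_deriv: "\<forall>t\<in>{0<..<1} - C. (g has_real_derivative gd t) (at t)"
begin

abbreviation Q :: "'a measure" where "Q \<equiv> Qm M gd X"

lemma space_Qm[simp]: "space Q = space M" and sets_Qm[simp]: "sets Q = sets M"
  by (simp_all add: Qm_def)

lemma borel_measurable_gd_surv_X[measurable]: "(\<lambda>\<omega>. gd (S (X \<omega>))) \<in> borel_measurable M"
proof -
  define k where "k u = (if u \<in> C \<union> {0,1} then gd u else deriv_off C gd u)" for u
  have [measurable]: "k \<in> borel_measurable borel"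
    unfolding k_def
    by (intro borel_measurable_if_countable borel_measurable_deriv_off[OF distortion_g countable_C g_deriv])
       (simp add: countable_C)
  have "gd (S (X \<omega>)) = k (S (X \<omega>))" for \<omega>
    using surv_nonneg[of "X \<omega>"] surv_le_1[of "X \<omega>"] by (auto simp: k_def deriv_off_def)
  then show ?thesis by simp
qed

lemma null_sets_surv_X_exceptional: "{\<omega>\<in>space M. S (X \<omega>) \<in> C \<union> {0,1}} \<in> null_sets M"
proof -
  have C01: "C \<union> {0,1} \<in> sets borel" by (rule sets.countable) (auto simp: countable_C)
  have "countable ({0..1} \<inter> (C \<union> {0,1::real}))" using countable_C by auto
  then have "{0..1} \<inter> (C \<union> {0,1::real}) \<in> null_sets lborel" by (rule countable_imp_null_set_lborel)
  then have "prob {\<omega>\<in>space M. S (X \<omega>) \<in> C \<union> {0,1}} = 0"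
    unfolding prob_surv_X_in[OF C01] by (simp add: measure_def null_setsD1)
  moreover have "{\<omega>\<in>space M. S (X \<omega>) \<in> C \<union> {0,1}} \<in> sets M" using C01 by measurable
  ultimately show ?thesis by (simp add: null_sets_def emeasure_eq_measure)
qed

text \<open>\<open>{S(X) \<ge> S(x)}\<close> and \<open>{X \<le> x}\<close> both have probability \<open>1 - S(x)\<close>, and the first contains
  the second.\<close>
lemma null_sets_greater_surv_ge: "{\<omega>\<in>space M. x < X \<omega> \<and> S x \<le> S (X \<omega>)} \<in> null_sets M"
proof -
  have split: "{\<omega>\<in>space M. S x \<le> S (X \<omega>)}
      = {\<omega>\<in>space M. X \<omega> \<le> x} \<union> {\<omega>\<in>space M. x < X \<omega> \<and> S x \<le> S (X \<omega>)}"
    using surv_antimono by force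
  have "prob {\<omega>\<in>space M. S x \<le> S (X \<omega>)} = measure lborel ({0..1} \<inter> {S x..})"
    using prob_surv_X_in[of "{S x..}"] by simp
  also have "{0..1} \<inter> {S x..} = {S x..1}" using surv_nonneg[of x] surv_le_1[of x] by auto
  finally have "prob {\<omega>\<in>space M. S x \<le> S (X \<omega>)} = 1 - S x"
    using surv_nonneg[of x] surv_le_1[of x] by simp
  moreover have "prob {\<omega>\<in>space M. X \<omega> \<le> x} = 1 - S x"
  proof -
    have "{\<omega>\<in>space M. X \<omega> \<le> x} = space M - {\<omega>\<in>space M. X \<omega> > x}" by auto
    then show ?thesis by (simp add: prob_compl surv_def)
  qed
  moreover have "prob {\<omega>\<in>space M. S x \<le> S (X \<omega>)}
      = prob {\<omega>\<in>space M. X \<omega> \<le> x} + prob {\<omega>\<in>space M. x < X \<omega> \<and> S x \<le> S (X \<omega>)}"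
    unfolding split by (rule finite_measure_Union) auto
  ultimately have "prob {\<omega>\<in>space M. x < X \<omega> \<and> S x \<le> S (X \<omega>)} = 0" by simp
  then show ?thesis by (simp add: null_sets_def emeasure_eq_measure)
qed

text \<open>On \<open>{X > x}\<close> we have \<open>S(X) < S(x)\<close> almost surely, so by the probability integral
  transform the \<open>Q\<close>-mass of \<open>{X > x}\<close> is the integral of \<open>g'\<close> over \<open>[0, S(x))\<close>.\<close>
lemma emeasure_Qm_greater: "emeasure Q {\<omega>\<in>space M. X \<omega> > x} = ennreal (g (S x))"
proof -
  define \<phi> where "\<phi> u = ennreal (deriv_off C gd u) * indicator {..<S x} u" for u
  have [measurable]: "\<phi> \<in> borel_measurable borel"
    unfolding \<phi>_def using borel_measurable_deriv_off[OF distortion_g countable_C g_deriv]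
    by measurable
  have "emeasure Q {\<omega>\<in>space M. X \<omega> > x}
      = (\<integral>\<^sup>+\<omega>. ennreal (gd (S (X \<omega>))) * indicator {\<omega>\<in>space M. X \<omega> > x} \<omega> \<partial>M)"
    unfolding Qm_def by (subst emeasure_density) auto
  also have "\<dots> = (\<integral>\<^sup>+\<omega>. \<phi> (S (X \<omega>)) \<partial>M)"
  proof (rule nn_integral_cong_AE)
    show "AE \<omega> in M. ennreal (gd (S (X \<omega>))) * indicator {\<omega>\<in>space M. X \<omega> > x} \<omega> = \<phi> (S (X \<omega>))"
      using AE_not_in[OF null_sets_surv_X_exceptional] AE_not_in[OF null_sets_greater_surv_ge[of x]] AE_space
    proof eventually_elim
      case (elim \<omega>)
      show ?case
      proof (cases "x < X \<omega>")
        case True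
        then have "S (X \<omega>) < S x" "S (X \<omega>) \<in> {0<..<1} - C"
          using elim surv_nonneg[of "X \<omega>"] surv_le_1[of "X \<omega>"] by auto
        then show ?thesis using True elim by (simp add: \<phi>_def deriv_off_def)
      next
        case False
        then have "S x \<le> S (X \<omega>)" using surv_antimono[of "X \<omega>" x] by simp
        then show ?thesis using False by (simp add: \<phi>_def)
      qed
    qed
  qed
  also have "\<dots> = (\<integral>\<^sup>+u. \<phi> u * indicator {0..1} u \<partial>lborel)"
    by (rule nn_integral_surv_X) measurable
  also have "\<dots> = (\<integral>\<^sup>+u. ennreal (deriv_off C gd u) * indicator {0..<S x} u \<partial>lborel)"
    using surv_le_1[of x] by (intro nn_integral_cong) (auto simp: \<phi>_def indicator_def)
  also have "\<dots> = ennreal (g (S x))"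
    by (rule nn_integral_deriv_off[OF distortion_g countable_C g_deriv surv_nonneg surv_le_1])
  finally show ?thesis .
qed

lemma prob_space_Qm: "prob_space Q"
proof
  have "{\<omega>\<in>space M. X \<omega> > -1} = space M" using X_nonneg by force
  then have "emeasure Q (space M) = ennreal (g (S (-1)))" using emeasure_Qm_greater[of "-1"] by simp
  also have "\<dots> = 1" using surv_neg[of "-1"] distortion_g by (simp add: distortion_def)
  finally show "emeasure Q (space Q) = 1" by simp
qed

lemma surv_Qm: "surv Q X x = g (S x)"
proof -
  have "g (S x) \<ge> 0"
    using distortion_g surv_nonneg[of x] surv_le_1[of x] by (auto simp: distortion_def image_subset_iff)
  then show ?thesis using emeasure_Qm_greater[of x] by (simp add: surv_def measure_def)
qed

end

definition tail_integral :: "'a measure \<Rightarrow> ('a \<Rightarrow> real) \<Rightarrow> ('a \<Rightarrow> real) \<Rightarrow> real \<Rightarrow> real" where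
  "tail_integral N R Y x = (\<integral>\<omega>. R \<omega> * indicator {\<omega>\<in>space N. Y \<omega> > x} \<omega> \<partial>N)"

locale weighted_tail = finite_measure N for N :: "'a measure" +
  fixes R Y :: "'a \<Rightarrow> real"
  assumes borel_measurable_R[measurable]: "R \<in> borel_measurable N"
    and borel_measurable_Y[measurable]: "Y \<in> borel_measurable N"
    and R_01: "\<And>\<omega>. \<omega> \<in> space N \<Longrightarrow> 0 \<le> R \<omega> \<and> R \<omega> \<le> 1"
begin

lemma integrable_mult_indicator_greater:
  "integrable N (\<lambda>\<omega>. R \<omega> * indicator {\<omega>\<in>space N. Y \<omega> > x} \<omega>)"
  by (rule integrable_const_bound[where B=1]) (auto simp: R_01 indicator_def intro!: AE_I2)

lemma integrable_indicator_greater: "integrable N (indicator {\<omega>\<in>space N. Y \<omega> > x} :: 'a \<Rightarrow> real)"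
  by (intro integrable_real_indicator) (auto simp: emeasure_eq_measure)

lemma tail_integral_nonneg: "0 \<le> tail_integral N R Y x"
  unfolding tail_integral_def by (intro integral_nonneg_AE AE_I2) (auto simp: R_01)

lemma tail_integral_diff_bounds:
  assumes "x \<le> y"
  shows "0 \<le> tail_integral N R Y x - tail_integral N R Y y"
    and "tail_integral N R Y x - tail_integral N R Y y \<le> surv N Y x - surv N Y y"
proof -
  let ?I = "\<lambda>x \<omega>. indicator {\<omega>\<in>space N. Y \<omega> > x} \<omega> :: real"
  have I_diff_nonneg: "0 \<le> ?I x \<omega> - ?I y \<omega>" for \<omega> using assms by (auto simp: indicator_def)
  have "tail_integral N R Y x - tail_integral N R Y y = (\<integral>\<omega>. R \<omega> * ?I x \<omega> - R \<omega> * ?I y \<omega> \<partial>N)"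
    unfolding tail_integral_def
    by (rule Bochner_Integration.integral_diff[symmetric])
       (rule integrable_mult_indicator_greater)+
  then have tail_diff: "tail_integral N R Y x - tail_integral N R Y y = (\<integral>\<omega>. R \<omega> * (?I x \<omega> - ?I y \<omega>) \<partial>N)"
    by (simp add: right_diff_distrib)
  have surv_diff: "surv N Y x - surv N Y y = (\<integral>\<omega>. ?I x \<omega> - ?I y \<omega> \<partial>N)"
    unfolding surv_def
    by (subst Bochner_Integration.integral_diff[OF integrable_indicator_greater integrable_indicator_greater])
       auto
  have "integrable N (\<lambda>\<omega>. R \<omega> * (?I x \<omega> - ?I y \<omega>))"
    unfolding right_diff_distrib
    by (intro Bochner_Integration.integrable_diff integrable_mult_indicator_greater)
  then show "tail_integral N R Y x - tail_integral N R Y y \<le> surv N Y x - surv N Y y"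
    unfolding tail_diff surv_diff
  proof (intro integral_mono_AE AE_I2 Bochner_Integration.integrable_diff integrable_indicator_greater)
    fix \<omega> assume "\<omega> \<in> space N"
    then show "R \<omega> * (?I x \<omega> - ?I y \<omega>) \<le> ?I x \<omega> - ?I y \<omega>"
      using R_01 I_diff_nonneg by (intro mult_left_le_one_le) auto
  qed
  show "0 \<le> tail_integral N R Y x - tail_integral N R Y y"
    unfolding tail_diff by (intro integral_nonneg_AE AE_I2 mult_nonneg_nonneg I_diff_nonneg) (simp add: R_01)
qed

lemma isCont_tail_integral:
  assumes "isCont (surv N Y) x0"
  shows "isCont (tail_integral N R Y) x0"
proof -
  have "((\<lambda>x. tail_integral N R Y x - tail_integral N R Y x0) \<longlongrightarrow> 0) (at x0)"
  proof (rule Lim_null_comparison)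
    show "\<forall>\<^sub>F x in at x0. norm (tail_integral N R Y x - tail_integral N R Y x0)
        \<le> \<bar>surv N Y x - surv N Y x0\<bar>"
    proof (intro always_eventually allI)
      fix x
      show "norm (tail_integral N R Y x - tail_integral N R Y x0) \<le> \<bar>surv N Y x - surv N Y x0\<bar>"
        using tail_integral_diff_bounds[of x x0] tail_integral_diff_bounds[of x0 x]
        by (cases "x \<le> x0") auto
    qed
    have "((\<lambda>x. surv N Y x - surv N Y x0) \<longlongrightarrow> surv N Y x0 - surv N Y x0) (at x0)"
      using assms by (intro tendsto_intros) (simp add: isCont_def)
    then show "((\<lambda>x. \<bar>surv N Y x - surv N Y x0\<bar>) \<longlongrightarrow> 0) (at x0)"
      using tendsto_rabs_zero_iff by fastforce
  qed
  then show ?thesis unfolding isCont_def using LIM_zero_cancel by blast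
qed

lemma borel_measurable_tail_integral[measurable]: "tail_integral N R Y \<in> borel_measurable borel"
proof -
  have "mono (\<lambda>x. - tail_integral N R Y x)"
  proof (rule monoI)
    fix x y :: real assume "x \<le> y"
    then show "- tail_integral N R Y x \<le> - tail_integral N R Y y"
      using tail_integral_diff_bounds(1)[OF \<open>x \<le> y\<close>] by linarith
  qed
  then have "(\<lambda>x. - (- tail_integral N R Y x)) \<in> borel_measurable borel"
    by (intro borel_measurable_uminus borel_measurable_mono)
  then show ?thesis unfolding minus_minus .
qed

lemma tail_integral_le_surv: "tail_integral N R Y x \<le> surv N Y x"
proof -
  have "tail_integral N R Y x \<le> (\<integral>\<omega>. indicator {\<omega>\<in>space N. Y \<omega> > x} \<omega> \<partial>N)"
    unfolding tail_integral_def
    by (intro integral_mono_AE integrable_mult_indicator_greater integrable_indicator_greater AE_I2)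
       (auto simp: R_01 indicator_def)
  then show ?thesis by (simp add: surv_def)
qed

lemma cond_exp_event_mult_surv:
  "cond_exp_event N R {\<omega>\<in>space N. Y \<omega> > x} * surv N Y x = tail_integral N R Y x"
  using tail_integral_nonneg[of x] tail_integral_le_surv[of x]
  by (cases "surv N Y x = 0") (auto simp: cond_exp_event_def tail_integral_def surv_def)

text \<open>Layer-cake formula: \<open>min y b = \<integral>\<^sub>0\<^sup>b [x < y] dx\<close>, integrated against \<open>R dN\<close> with Tonelli.\<close>
lemma nn_integral_mult_min_eq_tail_integral:
  assumes Y_nonneg: "\<And>\<omega>. \<omega> \<in> space N \<Longrightarrow> 0 \<le> Y \<omega>" and b: "0 \<le> b"
  shows "(\<integral>\<^sup>+\<omega>. ennreal (R \<omega> * min (Y \<omega>) b) \<partial>N)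
    = (\<integral>\<^sup>+x. ennreal (tail_integral N R Y x * indicator {0..b} x) \<partial>lborel)"
proof -
  define F where "F p = ennreal (R (fst p) * (if snd p < Y (fst p) then 1 else 0)
    * indicator {0..b} (snd p))" for p
  have [measurable]: "F \<in> borel_measurable (N \<Otimes>\<^sub>M lborel)"
    unfolding F_def by measurable
  interpret pair_sigma_finite N lborel
    unfolding pair_sigma_finite_def using sigma_finite_measure lborel.sigma_finite_measure_axioms
    by auto
  have inner_lborel: "(\<integral>\<^sup>+x. F (\<omega>, x) \<partial>lborel) = ennreal (R \<omega> * min (Y \<omega>) b)"
    if \<omega>: "\<omega> \<in> space N" for \<omega>
  proof -
    have "AE x in lborel. x \<notin> {b}" by (rule AE_not_in) auto
    then have "(\<integral>\<^sup>+x. F (\<omega>, x) \<partial>lborel)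
        = (\<integral>\<^sup>+x. ennreal (R \<omega>) * indicator {0..<min (Y \<omega>) b} x \<partial>lborel)"
      by (intro nn_integral_cong_AE) (auto simp: F_def indicator_def \<omega>)
    also have "\<dots> = ennreal (R \<omega> * min (Y \<omega>) b)"
      using Y_nonneg[OF \<omega>] b R_01[OF \<omega>] by (simp add: nn_integral_cmult_indicator ennreal_mult)
    finally show ?thesis .
  qed
  have inner_N: "(\<integral>\<^sup>+\<omega>. F (\<omega>, x) \<partial>N) = ennreal (tail_integral N R Y x * indicator {0..b} x)" for x
  proof -
    have "(\<integral>\<^sup>+\<omega>. F (\<omega>, x) \<partial>N) = (\<integral>\<^sup>+\<omega>. ennreal
        (R \<omega> * indicator {\<omega>\<in>space N. Y \<omega> > x} \<omega> * indicator {0..b} x) \<partial>N)"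
      by (rule nn_integral_cong) (auto simp: F_def indicator_def)
    also have "\<dots> = ennreal (\<integral>\<omega>. R \<omega> * indicator {\<omega>\<in>space N. Y \<omega> > x} \<omega> * indicator {0..b} x \<partial>N)"
      by (rule nn_integral_eq_integral)
         (auto intro!: integrable_mult_left integrable_mult_indicator_greater AE_I2 simp: R_01)
    finally show ?thesis by (simp add: tail_integral_def)
  qed
  have "(\<integral>\<^sup>+\<omega>. ennreal (R \<omega> * min (Y \<omega>) b) \<partial>N) = (\<integral>\<^sup>+\<omega>. (\<integral>\<^sup>+x. F (\<omega>, x) \<partial>lborel) \<partial>N)"
    by (rule nn_integral_cong) (simp add: inner_lborel)
  also have "\<dots> = (\<integral>\<^sup>+x. (\<integral>\<^sup>+\<omega>. F (\<omega>, x) \<partial>N) \<partial>lborel)"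
    by (rule Fubini[symmetric]) simp
  also have "\<dots> = (\<integral>\<^sup>+x. ennreal (tail_integral N R Y x * indicator {0..b} x) \<partial>lborel)"
    by (simp add: inner_N)
  finally show ?thesis .
qed

lemma integrable_mult_min:
  assumes Y_nonneg: "\<And>\<omega>. \<omega> \<in> space N \<Longrightarrow> 0 \<le> Y \<omega>" and b: "0 \<le> b"
  shows "integrable N (\<lambda>\<omega>. R \<omega> * min (Y \<omega>) b)"
proof (rule integrable_const_bound[where B=b])
  have "\<bar>R \<omega> * min (Y \<omega>) b\<bar> \<le> b" if "\<omega> \<in> space N" for \<omega>
  proof -
    have "R \<omega> * min (Y \<omega>) b \<le> min (Y \<omega>) b"
      using R_01[OF that] Y_nonneg[OF that] b by (intro mult_left_le_one_le) auto
    then show ?thesis using R_01[OF that] Y_nonneg[OF that] b by simp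
  qed
  then show "AE \<omega> in N. norm (R \<omega> * min (Y \<omega>) b) \<le> b" by (intro AE_I2) simp
qed simp

lemma integral_mult_min_eq_tail_integral:
  assumes Y_nonneg: "\<And>\<omega>. \<omega> \<in> space N \<Longrightarrow> 0 \<le> Y \<omega>" and b: "0 \<le> b"
  shows "set_integrable lborel {0..b} (tail_integral N R Y)"
    and "(\<integral>\<omega>. R \<omega> * min (Y \<omega>) b \<partial>N) = (LINT x:{0..b}|lborel. tail_integral N R Y x)"
proof -
  have "ennreal (\<integral>\<omega>. R \<omega> * min (Y \<omega>) b \<partial>N) = (\<integral>\<^sup>+\<omega>. ennreal (R \<omega> * min (Y \<omega>) b) \<partial>N)"
    by (rule nn_integral_eq_integral[symmetric, OF integrable_mult_min[OF Y_nonneg b]])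
       (auto intro!: AE_I2 simp: R_01 Y_nonneg b)
  then have nn_eq: "(\<integral>\<^sup>+x. ennreal (tail_integral N R Y x * indicator {0..b} x) \<partial>lborel)
      = ennreal (\<integral>\<omega>. R \<omega> * min (Y \<omega>) b \<partial>N)"
    by (simp add: nn_integral_mult_min_eq_tail_integral[OF Y_nonneg b])
  have "integrable lborel (\<lambda>x. tail_integral N R Y x * indicator {0..b} x)"
    by (rule integrableI_bounded) (simp_all add: tail_integral_nonneg nn_eq)
  then show int: "set_integrable lborel {0..b} (tail_integral N R Y)"
    by (simp add: set_integrable_def mult.commute)
  have "ennreal (LINT x:{0..b}|lborel. tail_integral N R Y x)
      = (\<integral>\<^sup>+x. ennreal (tail_integral N R Y x * indicator {0..b} x) \<partial>lborel)"
    using int unfolding set_integrable_def set_lebesgue_integral_def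
    by (subst nn_integral_eq_integral) (auto intro!: AE_I2 simp: tail_integral_nonneg mult.commute)
  then have "ennreal (LINT x:{0..b}|lborel. tail_integral N R Y x) = ennreal (\<integral>\<omega>. R \<omega> * min (Y \<omega>) b \<partial>N)"
    using nn_eq by simp
  moreover have "0 \<le> (\<integral>\<omega>. R \<omega> * min (Y \<omega>) b \<partial>N)"
    by (intro integral_nonneg_AE AE_I2) (auto simp: R_01 Y_nonneg b)
  moreover have "0 \<le> (LINT x:{0..b}|lborel. tail_integral N R Y x)"
    unfolding set_lebesgue_integral_def
    by (intro integral_nonneg_AE AE_I2) (simp add: tail_integral_nonneg indicator_def)
  ultimately show "(\<integral>\<omega>. R \<omega> * min (Y \<omega>) b \<partial>N) = (LINT x:{0..b}|lborel. tail_integral N R Y x)"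
    by simp
qed

end

lemma has_real_derivative_LINT_upper:
  fixes F h :: "real \<Rightarrow> real"
  assumes h: "continuous_on {0..} h" and a: "0 < a"
    and F: "\<And>b. 0 < b \<Longrightarrow> F b = (LINT x:{0..b}|lborel. h x)"
  shows "(F has_real_derivative h a) (at a)"
proof -
  have "((\<lambda>b. integral {0..b} h) has_real_derivative h a) (at a)"
    using a by (intro has_real_derivative_integral_upper[where b="2*a"] continuous_on_subset[OF h]) auto
  then show ?thesis
  proof (rule has_field_derivative_transform_within_open[where S="{0<..}"])
    fix b :: real assume b: "b \<in> {0<..}"
    have "set_integrable lborel {0..b} h"
      unfolding set_integrable_def
      by (intro borel_integrable_compact continuous_on_subset[OF h]) auto
    then show "integral {0..b} h = F b"
      using F b by (simp add: set_borel_integral_eq_integral)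
  qed (use a in auto)
qed

lemma (in prob_space) prob_eq_0_if_distributed:
  assumes "distributed M lborel X f"
  shows "prob {\<omega>\<in>space M. X \<omega> = t} = 0"
proof -
  have "emeasure M (X -` {t} \<inter> space M) = (\<integral>\<^sup>+x. f x * indicator {t} x \<partial>lborel)"
    using distributed_emeasure[OF assms] by simp
  also have "\<dots> = 0" by (simp add: nn_integral_indicator_singleton)
  finally show ?thesis by (simp add: measure_def vimage_def Int_def conj_commute)
qed

lemma Xtot_ratio_bounds:
  assumes "\<And>j. j \<in> {1..n} \<Longrightarrow> 0 \<le> Xs j \<omega>" and "i \<in> {1..n}"
  shows "0 \<le> Xs i \<omega> / Xtot Xs n \<omega> \<and> Xs i \<omega> / Xtot Xs n \<omega> \<le> 1"
proof -
  have "0 \<le> Xs i \<omega>" "Xs i \<omega> \<le> Xtot Xs n \<omega>"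
    using assms unfolding Xtot_def by (auto intro: member_le_sum)
  then show ?thesis by (cases "Xtot Xs n \<omega> = 0") (auto simp: divide_le_eq_1)
qed

context distorted_loss
begin

lemma isCont_surv_Qm: "isCont (surv Q X) x"
proof -
  have "S ` UNIV \<subseteq> {0..1}" using surv_nonneg surv_le_1 by auto
  then have "continuous_on UNIV (\<lambda>x. g (S x))"
    by (rule continuous_on_compose2[OF distortion_continuous_on[OF distortion_g] continuous_on_surv])
  then show ?thesis by (simp add: surv_Qm[abs_def] continuous_on_eq_continuous_at)
qed

lemma margin_eq_LINT:
  fixes R :: "'a \<Rightarrow> real"
  assumes [measurable]: "R \<in> borel_measurable M"
    and R_01: "\<And>\<omega>. \<omega> \<in> space M \<Longrightarrow> 0 \<le> R \<omega> \<and> R \<omega> \<le> 1"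
  defines "m x \<equiv> cond_exp_event Q R {\<omega>\<in>space M. X \<omega> > x} * g (S x)
                  - cond_exp_event M R {\<omega>\<in>space M. X \<omega> > x} * S x"
    and "margin b \<equiv> (\<integral>\<omega>. R \<omega> * min (X \<omega>) b \<partial>Q) - (\<integral>\<omega>. R \<omega> * min (X \<omega>) b \<partial>M)"
  assumes a: "0 < a"
  shows "set_integrable lborel {0..a} m \<and> margin a = (LINT x:{0..a}|lborel. m x)
    \<and> (margin has_real_derivative m a) (at a)"
proof -
  interpret Q: prob_space Q by (rule prob_space_Qm)
  interpret tail_M: weighted_tail M R X
    by unfold_locales (simp_all add: R_01)
  interpret tail_Q: weighted_tail Q R X
    by unfold_locales (simp_all add: R_01 cong: measurable_cong_sets)
  have m_eq: "m = (\<lambda>x. tail_integral Q R X x - tail_integral M R X x)"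
    using tail_Q.cond_exp_event_mult_surv tail_M.cond_exp_event_mult_surv by (auto simp: m_def surv_Qm fun_eq_iff)
  have m_cont: "continuous_on UNIV m"
    unfolding m_eq using tail_Q.isCont_tail_integral[OF isCont_surv_Qm] tail_M.isCont_tail_integral[OF isCont_surv]
    by (intro continuous_at_imp_continuous_on ballI continuous_intros)
  have margin_eq: "margin b = (LINT x:{0..b}|lborel. m x)" "set_integrable lborel {0..b} m"
    if "0 \<le> b" for b
    using tail_Q.integral_mult_min_eq_tail_integral[OF _ that] tail_M.integral_mult_min_eq_tail_integral[OF X_nonneg that] X_nonneg
    unfolding margin_def m_eq by (simp_all add: set_integral_diff)
  have "(margin has_real_derivative m a) (at a)"
    using a margin_eq(1) continuous_on_subset[OF m_cont]
    by (intro has_real_derivative_LINT_upper) auto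
  then show ?thesis using margin_eq[of a] a by simp
qed

end

theorem mainTheorem5:
  fixes M :: "'a measure" and Xs :: "nat \<Rightarrow> 'a \<Rightarrow> real" and n i :: nat
    and g gd :: "real \<Rightarrow> real" and f :: "real \<Rightarrow> ennreal" and a :: real
  assumes "prob_space M" and "atomless M"
    and "distortion g"
    and "\<exists>C. countable C \<and> (\<forall>t\<in>{0<..<1} - C. (g has_real_derivative gd t) (at t))"
    and "\<forall>j\<in>{1..n}. integrable M (Xs j) \<and> (\<forall>\<omega>\<in>space M. 0 \<le> Xs j \<omega>)"
    and "distributed M lborel (Xtot Xs n) f"
    and "rho M g (Xtot Xs n) < \<infinity>"
    and "i \<in> {1..n}" and "a > 0"
  shows "set_integrable lborel {0..a}
           (\<lambda>x. beta M gd Xs n i x * g (surv M (Xtot Xs n) x) - alpha M Xs n i x * surv M (Xtot Xs n) x)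
       \<and> Pbar M gd Xs n i a - Sbar M Xs n i a =
           (LINT x:{0..a}|lborel. beta M gd Xs n i x * g (surv M (Xtot Xs n) x)
                                  - alpha M Xs n i x * surv M (Xtot Xs n) x)
       \<and> ((\<lambda>b. Pbar M gd Xs n i b - Sbar M Xs n i b) has_real_derivative
           (beta M gd Xs n i a * g (surv M (Xtot Xs n) a) - alpha M Xs n i a * surv M (Xtot Xs n) a)) (at a)"
proof -
  obtain C where C: "countable C" "\<forall>t\<in>{0<..<1} - C. (g has_real_derivative gd t) (at t)"
    using assms(4) by blast
  interpret prob_space M by (rule assms(1))
  have Xs_nonneg: "\<And>j \<omega>. j \<in> {1..n} \<Longrightarrow> \<omega> \<in> space M \<Longrightarrow> 0 \<le> Xs j \<omega>" using assms(5) by auto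
  have "0 \<le> Xtot Xs n \<omega>" if "\<omega> \<in> space M" for \<omega>
    unfolding Xtot_def using Xs_nonneg that by (intro sum_nonneg) auto
  then have "continuous_loss M (Xtot Xs n)"
    using assms(1) distributed_measurable[OF assms(6)] prob_eq_0_if_distributed[OF assms(6)]
    by (intro continuous_loss.intro continuous_loss_axioms.intro) simp_all
  then interpret distorted_loss M "Xtot Xs n" g gd C
    using assms(3) C by (intro distorted_loss.intro distorted_loss_axioms.intro)
  define R where "R = (\<lambda>\<omega>. Xs i \<omega> / Xtot Xs n \<omega>)"
  have "Xs i \<in> borel_measurable M" using assms(5,8) by (auto intro: borel_measurable_integrable)
  then have R_measurable: "R \<in> borel_measurable M" unfolding R_def by measurable
  have R_01: "0 \<le> R \<omega> \<and> R \<omega> \<le> 1" if "\<omega> \<in> space M" for \<omega>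
    unfolding R_def using Xs_nonneg that assms(8) by (intro Xtot_ratio_bounds) auto
  have "eqpay Xs n i b = (\<lambda>\<omega>. R \<omega> * min (Xtot Xs n \<omega>) b)" for b
    by (simp add: eqpay_def R_def fun_eq_iff)
  then show ?thesis
    using margin_eq_LINT[OF R_measurable R_01 assms(9)]
    by (simp add: Pbar_def Sbar_def alpha_def beta_def R_def)
qed

end
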